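(* Let $K\subset\mathbb{R}$ be compact and $f:\mathbb{R}\to\mathbb{R}_+$ a continuous nonnegative function supported in $K$ with $f'\in C^\star_K$. Let $$u_2(x)=\frac{1}{4\pi}\int_{\mathbb{R}}\log\Big(\frac{y^2+(f(x+y)-f(x))^2}{y^2+(f(x+y)+f(x))^2}\Big)dy.$$ Then there are a constant $C$ depending only on $K$ and bounded functions $U,R$ such that for all $x\in\mathbb{R}$ $$u_2(x)=f(x)U(x)=-f(x)\big(1+R(x)\big),$$ with $\|U\|_{L^\infty}\le C\big(1+\|f'\|_D^6\big)$ and $\|R\|_{L^\infty}\le C\|f'\|_D\big(1+\|f'\|_{L^\infty}^5\big)$.
   Context: $\omega_h(r)=\sup_{|x-y|\le r}|h(x)-h(y)|$; $\|h\|_D=\int_0^1\frac{\omega_h(r)}{r}dr$; $C^\star_K$ is the space of bounded continuous functions supported in $K$ with $\|h\|_D<\infty$. *)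

theory Defs
  imports "HOL-Analysis.Analysis"
begin

definition modulus_cont :: "(real \<Rightarrow> real) \<Rightarrow> real \<Rightarrow> real" where
  "modulus_cont h r = (SUP p \<in> {(x, y). \<bar>x - y\<bar> \<le> r}. \<bar>h (fst p) - h (snd p)\<bar>)"

definition dini_norm :: "(real \<Rightarrow> real) \<Rightarrow> real" where
  "dini_norm h = (LINT r:{0<..1}|lborel. modulus_cont h r / r)"

definition Cstar :: "real set \<Rightarrow> (real \<Rightarrow> real) set" where
  "Cstar K = {h. continuous_on UNIV h \<and> bounded (range h) \<and> (\<forall>x. x \<notin> K \<longrightarrow> h x = 0)
               \<and> set_integrable lborel {0<..1} (\<lambda>r. modulus_cont h r / r)}"

definition sup_norm :: "(real \<Rightarrow> real) \<Rightarrow> real" where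
  "sup_norm h = (SUP x. \<bar>h x\<bar>)"

definition u2 :: "(real \<Rightarrow> real) \<Rightarrow> real \<Rightarrow> real" where
  "u2 f x = 1 / (4 * pi) *
     (LINT y|lborel. ln ((y\<^sup>2 + (f (x + y) - f x)\<^sup>2) / (y\<^sup>2 + (f (x + y) + f x)\<^sup>2)))"

end

theory Submission
  imports Defs "HOL-Real_Asymp.Real_Asymp"
begin

text \<open>
  Write \<open>a = f x > 0\<close> and \<open>s = f' x\<close>. For \<open>y \<noteq> 0\<close> the integrand of \<open>u2\<close> is \<open>\<phi>(f(x + y) - a)\<close>
  with \<open>\<phi>(t) = ln (y^2 + t^2) - ln (y^2 + (t + 2a)^2)\<close>, and \<open>\<phi>(0) = - ln (1 + 4a^2/y^2)\<close> has integral
  \<open>-4\<pi>a\<close>: this is the leading term \<open>-f x\<close>. Pairing \<open>y\<close> with \<open>-y\<close>, the rest of the integrand is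
  \<open>(\<phi>(f(x + y) - a) - \<phi>(sy)) + (\<phi>(f(x - y) - a) - \<phi>(-sy)) + (\<phi>(sy) + \<phi>(-sy) - 2\<phi>(0))\<close>.
  Since \<open>\<phi>\<close> is \<open>4a/y^2\<close>-Lipschitz, the first two brackets are at most \<open>4a \<omega>(y)/y\<close>, where \<open>\<omega>\<close> is the
  modulus of continuity of \<open>f'\<close>; the second difference is \<open>O(s^2)\<close> for \<open>y \<le> 2a\<close> and
  \<open>O(a^2 s^2 (1 + s^2)/y^2)\<close> beyond. Integrating gives
  \<open>|u2 f x + f x| \<le> a O(\<parallel>f'\<parallel>_D + \<parallel>f'\<parallel>_\<infinity> + s^2 + s^4 + a)\<close>, and as \<open>f'\<close> vanishes outside the
  bounded set \<open>K\<close>, both \<open>\<parallel>f'\<parallel>_\<infinity>\<close> and \<open>a\<close> are bounded by multiples of \<open>\<parallel>f'\<parallel>_D\<close>.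
\<close>

section \<open>Elementary integrals\<close>

lemma set_integral_ln_one_plus_sq_div_sq:
  fixes c :: real
  assumes c: "0 < c"
  shows "set_integrable lborel {0<..} (\<lambda>y. ln (1 + c^2/y^2))"
    and "(LBINT y:{0<..}. ln (1 + c^2/y^2)) = pi * c"
proof -
  let ?F = "\<lambda>y. y * ln (1 + c^2/y^2) + 2 * c * arctan (y / c)"
  have pos: "0 < 1 + c^2/y^2" for y :: real
    by (simp add: add_pos_nonneg)
  have deriv: "(?F has_real_derivative ln (1 + c^2/y^2)) (at y)" if "0 < y" for y
    using that c
    by (auto intro!: derivative_eq_intros simp: add_pos_nonneg)
       (simp add: divide_simps power2_eq_square; algebra)
  have lim0: "((?F \<circ> real_of_ereal) \<longlongrightarrow> 0) (at_right 0)"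
    unfolding zero_ereal_def ereal_tendsto_simps using c by real_asymp
  have lim_inf: "((?F \<circ> real_of_ereal) \<longlongrightarrow> pi * c) (at_left \<infinity>)"
    unfolding ereal_tendsto_simps using c by real_asymp
  have cont: "isCont (\<lambda>y. ln (1 + c^2/y^2)) y" if "0 < y" for y
    using that pos[of y] by (auto intro!: continuous_intros)
  have ei: "einterval 0 \<infinity> = {0::real<..}"
    by (auto simp: einterval_def zero_ereal_def)
  have "set_integrable lborel (einterval 0 \<infinity>) (\<lambda>y. ln (1 + c^2/y^2))"
    by (rule interval_integral_FTC_nonneg(1)[OF _ _ _ _ lim0 lim_inf])
       (use deriv cont in \<open>auto simp: ei zero_ereal_def\<close>)
  then show "set_integrable lborel {0<..} (\<lambda>y. ln (1 + c^2/y^2))"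
    by (simp add: ei)
  have "(LBINT y=0..\<infinity>. ln (1 + c^2/y^2)) = pi * c - 0"
    by (rule interval_integral_FTC_nonneg(2)[OF _ _ _ _ lim0 lim_inf])
       (use deriv cont in \<open>auto simp: ei zero_ereal_def\<close>)
  then show "(LBINT y:{0<..}. ln (1 + c^2/y^2)) = pi * c"
    by (simp add: interval_lebesgue_integral_def ei)
qed

lemma set_integral_inverse_square:
  fixes c :: real
  assumes c: "0 < c"
  shows "set_integrable lborel {c<..} (\<lambda>y. 1/y^2)"
    and "(LBINT y:{c<..}. 1/y^2) = 1/c"
proof -
  let ?F = "\<lambda>y::real. - 1/y"
  have deriv: "(?F has_real_derivative 1/y^2) (at y)" if "c < y" for y
    using that c by (auto intro!: derivative_eq_intros simp: power2_eq_square)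
  have lim_c: "((?F \<circ> real_of_ereal) \<longlongrightarrow> -1/c) (at_right (ereal c))"
    unfolding ereal_tendsto_simps using c by real_asymp (simp add: field_simps)
  have lim_inf: "((?F \<circ> real_of_ereal) \<longlongrightarrow> 0) (at_left \<infinity>)"
    unfolding ereal_tendsto_simps by real_asymp
  have ei: "einterval (ereal c) \<infinity> = {c<..}"
    by (auto simp: einterval_def)
  have "set_integrable lborel (einterval (ereal c) \<infinity>) (\<lambda>y. 1/y^2)"
    by (rule interval_integral_FTC_nonneg(1)[OF _ _ _ _ lim_c lim_inf])
       (use deriv c in \<open>auto intro!: continuous_intros\<close>)
  then show "set_integrable lborel {c<..} (\<lambda>y. 1/y^2)"
    by (simp add: ei)
  have "(LBINT y=ereal c..\<infinity>. 1/y^2) = 0 - (-1/c)"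
    by (rule interval_integral_FTC_nonneg(2)[OF _ _ _ _ lim_c lim_inf])
       (use deriv c in \<open>auto intro!: continuous_intros\<close>)
  then show "(LBINT y:{c<..}. 1/y^2) = 1/c"
    by (simp add: interval_integral_to_infinity_eq)
qed

lemma lborel_integral_even:
  fixes g :: "real \<Rightarrow> real"
  assumes meas: "g \<in> borel_measurable lborel"
    and even: "\<And>y. g (-y) = g y"
    and int: "set_integrable lborel {0<..} g"
  shows "integrable lborel g" and "integral\<^sup>L lborel g = 2 * (LBINT y:{0<..}. g y)"
proof -
  let ?pos = "\<lambda>y. indicator {0<..} y * g y"
  let ?neg = "\<lambda>y. indicator {0<..} (0 + (-1) * y) * g (0 + (-1) * y)"
  have int_pos: "integrable lborel ?pos"
    using int by (simp add: set_integrable_def)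
  have int_neg: "integrable lborel ?neg"
    using lborel_integrable_real_affine[OF int_pos, of "-1" 0] by simp
  have ae: "AE y in lborel. g y = ?pos y + ?neg y"
    using AE_lborel_singleton[of 0]
    by eventually_elim (auto simp: indicator_def even)
  show "integrable lborel g"
    using integrable_cong_AE[OF meas _ ae] int_pos int_neg by simp
  have "integral\<^sup>L lborel g = integral\<^sup>L lborel ?pos + integral\<^sup>L lborel ?neg"
    using integral_cong_AE[OF meas _ ae] int_pos int_neg by simp
  also have "integral\<^sup>L lborel ?neg = integral\<^sup>L lborel ?pos"
    using lborel_integral_real_affine[of "-1" ?pos 0] by simp
  finally show "integral\<^sup>L lborel g = 2 * (LBINT y:{0<..}. g y)"
    by (simp add: set_lebesgue_integral_def)
qed

section \<open>Modulus of continuity and Dini norm\<close>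

lemma real_lipschitz_from_deriv_bound:
  fixes f f' :: "real \<Rightarrow> real"
  assumes "convex S" "\<And>z. z \<in> S \<Longrightarrow> (f has_real_derivative f' z) (at z)"
    and "\<And>z. z \<in> S \<Longrightarrow> \<bar>f' z\<bar> \<le> B" and "u \<in> S" "v \<in> S"
  shows "\<bar>f u - f v\<bar> \<le> B * \<bar>u - v\<bar>"
  using field_differentiable_bound[of S f f' B u v] assms
  by (simp add: has_field_derivative_at_within)

lemma bdd_above_abs_diff_image:
  fixes h :: "real \<Rightarrow> real"
  assumes "\<And>z. \<bar>h z\<bar> \<le> L"
  shows "bdd_above ((\<lambda>p. \<bar>h (fst p) - h (snd p)\<bar>) ` A)"
proof (rule bdd_aboveI[where M = "2 * L"])
  fix t assume "t \<in> (\<lambda>p. \<bar>h (fst p) - h (snd p)\<bar>) ` A"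
  then obtain p where "t = \<bar>h (fst p) - h (snd p)\<bar>" by blast
  then show "t \<le> 2 * L" using assms[of "fst p"] assms[of "snd p"] by linarith
qed

lemma abs_diff_le_modulus_cont:
  fixes h :: "real \<Rightarrow> real"
  assumes "\<And>z. \<bar>h z\<bar> \<le> L" and "\<bar>u - v\<bar> \<le> r"
  shows "\<bar>h u - h v\<bar> \<le> modulus_cont h r"
  unfolding modulus_cont_def
  using cSUP_upper[OF _ bdd_above_abs_diff_image[OF assms(1)], of "(u, v)" "{(x, y). \<bar>x - y\<bar> \<le> r}"]
    assms(2) by auto

lemma modulus_cont_le:
  fixes h :: "real \<Rightarrow> real"
  assumes "\<And>z. \<bar>h z\<bar> \<le> L" and "0 \<le> r"
  shows "modulus_cont h r \<le> 2 * L"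
  unfolding modulus_cont_def
proof (rule cSUP_least)
  show "{(x, y). \<bar>x - y\<bar> \<le> r} \<noteq> {}"
    using assms(2) by (auto intro!: exI[of _ 0])
  show "\<bar>h (fst p) - h (snd p)\<bar> \<le> 2 * L" for p
    using assms(1)[of "fst p"] assms(1)[of "snd p"] by linarith
qed

lemma modulus_cont_nonneg:
  fixes h :: "real \<Rightarrow> real"
  assumes "\<And>z. \<bar>h z\<bar> \<le> L" and "0 \<le> r"
  shows "0 \<le> modulus_cont h r"
  using abs_diff_le_modulus_cont[OF assms(1), of 0 0 r] assms(2) by simp

lemma modulus_cont_mono:
  fixes h :: "real \<Rightarrow> real"
  assumes "\<And>z. \<bar>h z\<bar> \<le> L" and "0 \<le> r" and "r \<le> r'"
  shows "modulus_cont h r \<le> modulus_cont h r'"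
  unfolding modulus_cont_def
proof (rule cSUP_subset_mono)
  show "{(x, y). \<bar>x - y\<bar> \<le> r} \<noteq> {}"
    using assms(2) by (auto intro!: exI[of _ 0])
qed (use assms(3) bdd_above_abs_diff_image[of h L, OF assms(1)] in auto)

lemma modulus_cont_add_le:
  fixes h :: "real \<Rightarrow> real"
  assumes L: "\<And>z. \<bar>h z\<bar> \<le> L" and r1: "0 \<le> r1" and r2: "0 \<le> r2"
  shows "modulus_cont h (r1 + r2) \<le> modulus_cont h r1 + modulus_cont h r2"
  unfolding modulus_cont_def[of h "r1 + r2"]
proof (rule cSUP_least)
  show "{(x, y). \<bar>x - y\<bar> \<le> r1 + r2} \<noteq> {}"
    using r1 r2 by (auto intro!: exI[of _ 0])
  fix p assume "p \<in> {(x, y). \<bar>x - y\<bar> \<le> r1 + r2}"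
  then obtain x y where p: "p = (x, y)" and xy: "\<bar>x - y\<bar> \<le> r1 + r2" by auto
  define m where "m = (if x \<le> y then min (x + r1) y else max (x - r1) y)"
  have "\<bar>x - m\<bar> \<le> r1" and "\<bar>m - y\<bar> \<le> r2"
    using xy r1 r2 by (auto simp: m_def)
  then have "\<bar>h x - h m\<bar> + \<bar>h m - h y\<bar> \<le> modulus_cont h r1 + modulus_cont h r2"
    by (intro add_mono abs_diff_le_modulus_cont[OF L])
  then show "\<bar>h (fst p) - h (snd p)\<bar> \<le> modulus_cont h r1 + modulus_cont h r2"
    by (simp add: p)
qed

lemma modulus_cont_mult_le:
  fixes h :: "real \<Rightarrow> real"
  assumes L: "\<And>z. \<bar>h z\<bar> \<le> L" and r: "0 \<le> r"
  shows "modulus_cont h (real (Suc n) * r) \<le> real (Suc n) * modulus_cont h r"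
proof (induction n)
  case (Suc n)
  have "modulus_cont h (real (Suc (Suc n)) * r) = modulus_cont h (r + real (Suc n) * r)"
    by (simp add: algebra_simps)
  also have "\<dots> \<le> modulus_cont h r + modulus_cont h (real (Suc n) * r)"
    using r by (intro modulus_cont_add_le[OF L]) auto
  also have "\<dots> \<le> real (Suc (Suc n)) * modulus_cont h r"
    using Suc by (simp add: algebra_simps)
  finally show ?case .
qed simp

lemma modulus_cont_le_scaled:
  fixes h :: "real \<Rightarrow> real"
  assumes L: "\<And>z. \<bar>h z\<bar> \<le> L" and r: "0 < r" and R: "0 \<le> R"
  shows "modulus_cont h R \<le> (R / r + 1) * modulus_cont h r"
proof -
  define n where "n = nat \<lfloor>R / r\<rfloor>"
  have "R / r < real (Suc n)" and n: "real (Suc n) \<le> R / r + 1"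
    using r R by (auto simp: n_def) linarith+
  then have "R \<le> real (Suc n) * r"
    using r by (simp add: field_simps)
  then have "modulus_cont h R \<le> modulus_cont h (real (Suc n) * r)"
    by (rule modulus_cont_mono[OF L R])
  also have "\<dots> \<le> real (Suc n) * modulus_cont h r"
    using r by (intro modulus_cont_mult_le[OF L]) simp
  also have "\<dots> \<le> (R / r + 1) * modulus_cont h r"
    using r by (intro mult_right_mono[OF n] modulus_cont_nonneg[OF L]) simp
  finally show ?thesis .
qed

lemma abs_taylor_remainder_le_modulus_cont:
  fixes f f' :: "real \<Rightarrow> real"
  assumes fder: "\<And>z. (f has_real_derivative f' z) (at z)" and L: "\<And>z. \<bar>f' z\<bar> \<le> L"
  shows "\<bar>f (x + y) - f x - f' x * y\<bar> \<le> \<bar>y\<bar> * modulus_cont f' \<bar>y\<bar>"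
proof -
  let ?g = "\<lambda>z. f z - f' x * z"
  have "\<bar>?g (x + y) - ?g x\<bar> \<le> modulus_cont f' \<bar>y\<bar> * \<bar>(x + y) - x\<bar>"
  proof (rule real_lipschitz_from_deriv_bound[of "closed_segment x (x + y)"])
    show "(?g has_real_derivative f' z - f' x) (at z)" for z
      using fder[of z] by (auto intro!: derivative_eq_intros)
    show "\<bar>f' z - f' x\<bar> \<le> modulus_cont f' \<bar>y\<bar>" if "z \<in> closed_segment x (x + y)" for z
      using dist_in_closed_segment[OF that]
      by (intro abs_diff_le_modulus_cont[of f' L, OF L]) (simp add: dist_real_def)
  qed auto
  then show ?thesis
    by (simp add: algebra_simps)
qed

lemma dini_norm_nonneg:
  fixes h :: "real \<Rightarrow> real"
  assumes "\<And>z. \<bar>h z\<bar> \<le> L"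
  shows "0 \<le> dini_norm h"
  unfolding dini_norm_def set_lebesgue_integral_def
  by (intro Bochner_Integration.integral_nonneg)
     (use modulus_cont_nonneg[OF assms] in \<open>auto simp: indicator_def\<close>)

text \<open>Since \<open>\<omega>(Y) \<le> \<omega>(r) (Y + 1) / r\<close> for \<open>0 < r \<le> 1\<close>, averaging over \<open>r \<in> (0, 1]\<close>
  bounds \<open>\<omega>(Y)\<close>, and hence \<open>h\<close> near one of its zeros, by the Dini norm.\<close>
lemma abs_le_dini_norm:
  fixes h :: "real \<Rightarrow> real"
  assumes L: "\<And>z. \<bar>h z\<bar> \<le> L" and Y: "0 \<le> Y"
    and zero: "\<bar>z - z'\<bar> \<le> Y" "h z' = 0"
    and dini: "set_integrable lborel {0<..1} (\<lambda>r. modulus_cont h r / r)"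
  shows "\<bar>h z\<bar> \<le> (Y + 1) * dini_norm h"
proof -
  have hz: "\<bar>h z\<bar> \<le> modulus_cont h Y"
    using abs_diff_le_modulus_cont[of h L, OF L zero(1)] zero(2) by simp
  have pointwise: "modulus_cont h Y / (Y + 1) \<le> modulus_cont h r / r" if "r \<in> {0<..1}" for r
  proof -
    have r: "0 < r" "r \<le> 1" using that by auto
    have "modulus_cont h Y \<le> (Y / r + 1) * modulus_cont h r"
      by (rule modulus_cont_le_scaled[OF L r(1) Y])
    also have "\<dots> \<le> ((Y + 1) / r) * modulus_cont h r"
      using r by (intro mult_right_mono modulus_cont_nonneg[OF L]) (auto simp: field_simps)
    finally show ?thesis
      using r Y by (simp add: field_simps)
  qed
  have const: "set_integrable lborel {0<..1} (\<lambda>r::real. modulus_cont h Y / (Y + 1))"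
    unfolding set_integrable_def
    by (intro integrable_scaleR_left integrable_real_indicator) auto
  have "modulus_cont h Y / (Y + 1) = (LBINT (r::real):{0<..1}. modulus_cont h Y / (Y + 1))"
    by (subst set_integral_const) auto
  also have "\<dots> \<le> dini_norm h"
    unfolding dini_norm_def by (rule set_integral_mono[OF const dini pointwise])
  finally show ?thesis
    using hz Y by (simp add: field_simps)
qed

lemma abs_le_sup_norm:
  fixes h :: "real \<Rightarrow> real"
  assumes "bounded (range h)"
  shows "\<bar>h x\<bar> \<le> sup_norm h"
proof -
  obtain M where "\<forall>y\<in>range h. norm y \<le> M"
    using assms unfolding bounded_iff by blast
  then have "bdd_above (range (\<lambda>z. \<bar>h z\<bar>))"
    by (intro bdd_aboveI[where M = M]) auto
  then show ?thesis
    unfolding sup_norm_def by (rule cSUP_upper[OF UNIV_I])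
qed

lemma sup_norm_le:
  fixes h :: "real \<Rightarrow> real"
  assumes "\<And>x. \<bar>h x\<bar> \<le> B"
  shows "sup_norm h \<le> B"
  unfolding sup_norm_def using assms by (intro cSUP_least) auto

section \<open>The logarithmic kernel\<close>

lemma abs_diff_twice_div_sq_add_sq_le:
  fixes y t t' :: real
  assumes y: "y \<noteq> 0"
  shows "\<bar>2*t/(y^2 + t^2) - 2*t'/(y^2 + t'^2)\<bar> \<le> 2/y^2 * \<bar>t - t'\<bar>"
proof (rule real_lipschitz_from_deriv_bound[OF convex_UNIV])
  have pos: "0 < y^2 + z^2" for z
    using y by (simp add: add_pos_nonneg)
  show "((\<lambda>t. 2*t/(y^2 + t^2)) has_real_derivative 2 * (y^2 - z^2) / (y^2 + z^2)^2) (at z)" for z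
    using pos[of z]
    by (auto intro!: derivative_eq_intros simp: add_pos_nonneg)
       (simp add: divide_simps power2_eq_square; algebra)
  show "\<bar>2 * (y^2 - z^2) / (y^2 + z^2)^2\<bar> \<le> 2/y^2" for z
  proof -
    have "\<bar>y^2 - z^2\<bar> \<le> y^2 + z^2"
      by (simp add: abs_le_iff)
    then have "\<bar>2 * (y^2 - z^2) / (y^2 + z^2)^2\<bar> \<le> 2 * (y^2 + z^2) / (y^2 + z^2)^2"
      by (simp add: abs_divide abs_mult divide_right_mono)
    also have "\<dots> = 2 / (y^2 + z^2)"
      using pos[of z] by (metis nonzero_mult_divide_mult_cancel_right power2_eq_square less_irrefl)
    also have "\<dots> \<le> 2/y^2"
      using y pos[of z] by (intro divide_left_mono) auto
    finally show ?thesis .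
  qed
qed auto

definition log_kernel :: "real \<Rightarrow> real \<Rightarrow> real \<Rightarrow> real" where
  "log_kernel a y t = ln (y^2 + t^2) - ln (y^2 + (t + 2*a)^2)"

lemma log_kernel_lipschitz:
  fixes a y u v :: real
  assumes y: "y \<noteq> 0" and a: "0 \<le> a"
  shows "\<bar>log_kernel a y u - log_kernel a y v\<bar> \<le> 4*a/y^2 * \<bar>u - v\<bar>"
proof (rule real_lipschitz_from_deriv_bound[OF convex_UNIV])
  have pos: "0 < y^2 + t^2" for t
    using y by (simp add: add_pos_nonneg)
  show "(log_kernel a y has_real_derivative 2*z/(y^2 + z^2) - 2*(z + 2*a)/(y^2 + (z + 2*a)^2)) (at z)"
    for z
    unfolding log_kernel_def[abs_def]
    by (rule derivative_eq_intros refl | use pos in simp)+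
  show "\<bar>2*z/(y^2 + z^2) - 2*(z + 2*a)/(y^2 + (z + 2*a)^2)\<bar> \<le> 4*a/y^2" for z
    using abs_diff_twice_div_sq_add_sq_le[OF y, of z "z + 2*a"] a by simp
qed auto

lemma log_kernel_second_difference:
  fixes a y w :: real
  assumes y: "0 < y"
  defines "q \<equiv> 1 + w^2" and "u \<equiv> y^2 + 4*a^2"
    and "P \<equiv> (y^2 + (w*y + 2*a)^2) * (y^2 + (w*y - 2*a)^2)"
  shows "log_kernel a y (w*y) + log_kernel a y (-(w*y)) - 2 * log_kernel a y 0 = ln (q^2*u^2/P)"
    and "0 \<le> q^2*u^2 - P" and "q^2*u^2 - P \<le> 28*a^2*w^2*q*u"
    and "y^2*y^2 \<le> P" and "(4*a^2)^2 \<le> q^2*P"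
proof -
  define Ap where "Ap = y^2 + (w*y + 2*a)^2"
  define Am where "Am = y^2 + (w*y - 2*a)^2"
  have y2: "0 < y^2" using y by simp
  have q: "1 \<le> q" unfolding q_def by simp
  have u: "y^2 \<le> u" "4*a^2 \<le> u" "0 \<le> u" unfolding u_def by simp_all
  have Ap: "y^2 \<le> Ap" and Am: "y^2 \<le> Am" unfolding Ap_def Am_def by simp_all
  have P: "P = Ap * Am" unfolding P_def Ap_def Am_def ..
  show P_ge: "y^2*y^2 \<le> P"
    unfolding P using Ap Am y2 by (intro mult_mono) linarith+
  have "q*Ap = (q*y + 2*a*w)^2 + 4*a^2" and "q*Am = (q*y - 2*a*w)^2 + 4*a^2"
    unfolding q_def Ap_def Am_def by (simp_all add: algebra_simps power2_eq_square)
  then have qAp: "4*a^2 \<le> q*Ap" and qAm: "4*a^2 \<le> q*Am"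
    by simp_all
  have "4*a^2 * (4*a^2) \<le> (q*Ap) * (q*Am)"
    by (rule mult_mono[OF qAp qAm]) (use qAp zero_le_power2[of a] in linarith)+
  then show "(4*a^2)^2 \<le> q^2*P"
    unfolding P by (simp add: power2_eq_square algebra_simps)
  have N: "q^2*u^2 - P = 4*a^2*w^2*(q*u + q*y^2 + 4*a^2) + 16*a^2*w^2*y^2"
    unfolding P_def q_def u_def power2_eq_square by algebra
  have "0 \<le> 4*a^2*w^2*(q*u + q*y^2 + 4*a^2) + 16*a^2*w^2*y^2"
    using q u by (intro add_nonneg_nonneg mult_nonneg_nonneg) auto
  then show "0 \<le> q^2*u^2 - P"
    unfolding N .
  have "q*u + q*y^2 + 4*a^2 \<le> 3*(q*u)" and "y^2 \<le> q*u"
    using q u y2 mult_right_mono[OF q, of u] mult_left_mono[OF u(1), of q] by linarith+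
  then have "4*a^2*w^2*(q*u + q*y^2 + 4*a^2) + 16*a^2*w^2*y^2
      \<le> 4*a^2*w^2*(3*(q*u)) + 16*a^2*w^2*(q*u)"
    by (intro add_mono mult_left_mono) auto
  then show "q^2*u^2 - P \<le> 28*a^2*w^2*q*u"
    unfolding N by (simp add: algebra_simps)
  have pos: "0 < q" "0 < u" "0 < Ap" "0 < Am"
    using q u Ap Am y2 by linarith+
  have sq: "y^2 + (w*y)^2 = q * y^2" "y^2 + (-(w*y))^2 = q * y^2" "y^2 + (0 + 2*a)^2 = u"
    "y^2 + (-(w*y) + 2*a)^2 = Am"
    unfolding q_def u_def Am_def by (simp_all add: algebra_simps power2_eq_square)
  have "log_kernel a y (w*y) + log_kernel a y (-(w*y)) - 2 * log_kernel a y 0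
      = 2 * ln q + 2 * ln u - ln Ap - ln Am"
    unfolding log_kernel_def sq Ap_def[symmetric] using pos y2 by (simp add: ln_mult)
  also have "\<dots> = ln (q^2*u^2/P)"
    unfolding P using pos by (simp add: ln_div ln_mult power2_eq_square)
  finally show "log_kernel a y (w*y) + log_kernel a y (-(w*y)) - 2 * log_kernel a y 0
      = ln (q^2*u^2/P)" .
qed

lemma log_kernel_second_difference_nonneg:
  fixes a y w :: real
  assumes y: "0 < y"
  shows "0 \<le> log_kernel a y (w*y) + log_kernel a y (-(w*y)) - 2 * log_kernel a y 0"
proof -
  define q u P where "q = 1 + w^2" and "u = y^2 + 4*a^2"
    and "P = (y^2 + (w*y + 2*a)^2) * (y^2 + (w*y - 2*a)^2)"
  note D = log_kernel_second_difference[OF y, where a=a and w=w, folded q_def u_def P_def]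
  have "0 < P" using D(4) y by (smt (verit) zero_less_power mult_pos_pos)
  then have "1 \<le> q^2*u^2/P" using D(2) by simp
  then show ?thesis unfolding D(1) by simp
qed

lemma log_kernel_second_difference_le_far:
  fixes a y w :: real
  assumes y: "0 < y" and a: "0 \<le> a" and ya: "2*a \<le> y"
  shows "log_kernel a y (w*y) + log_kernel a y (-(w*y)) - 2 * log_kernel a y 0
    \<le> 56 * a^2 * w^2 * (1 + w^2) / y^2"
proof -
  define q u P where "q = 1 + w^2" and "u = y^2 + 4*a^2"
    and "P = (y^2 + (w*y + 2*a)^2) * (y^2 + (w*y - 2*a)^2)"
  note D = log_kernel_second_difference[OF y, where a=a and w=w, folded q_def u_def P_def]
  have y4: "0 < y^2*y^2" using y by simp
  have P: "0 < P" using D(4) y4 by linarith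
  have q: "0 < q" unfolding q_def by (simp add: add_pos_nonneg)
  have u: "u \<le> 2*y^2"
    using power_mono[OF ya, of 2] a unfolding u_def by (simp add: power_mult_distrib)
  have u0: "0 < u" unfolding u_def using y by (simp add: add_pos_nonneg)
  then have "ln (q^2*u^2/P) \<le> q^2*u^2/P - 1"
    using P q by (intro ln_le_minus_one) simp
  also have "\<dots> = (q^2*u^2 - P)/P"
    using P by (simp add: field_simps)
  also have "\<dots> \<le> (28*a^2*w^2*q*u)/(y^2*y^2)"
    using D(2,3,4) y4 q u0 by (intro frac_le) auto
  also have "\<dots> \<le> (28*a^2*w^2*q*(2*y^2))/(y^2*y^2)"
    using u q y4 by (intro divide_right_mono mult_left_mono) auto
  also have "\<dots> = 56 * a^2 * w^2 * (1 + w^2) / y^2"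
    using y unfolding q_def by (simp add: field_simps power2_eq_square)
  finally show ?thesis unfolding D(1) .
qed

lemma log_kernel_second_difference_le_near:
  fixes a y w :: real
  assumes y: "0 < y" and a: "0 < a" and ya: "y \<le> 2*a"
  shows "log_kernel a y (w*y) + log_kernel a y (-(w*y)) - 2 * log_kernel a y 0 \<le> 112 * w^2"
proof -
  define q u P where "q = 1 + w^2" and "u = y^2 + 4*a^2"
    and "P = (y^2 + (w*y + 2*a)^2) * (y^2 + (w*y - 2*a)^2)"
  note D = log_kernel_second_difference[OF y, where a=a and w=w, folded q_def u_def P_def]
  have a4: "0 < (4*a^2)^2" using a by simp
  have q: "1 \<le> q" unfolding q_def by simp
  have u: "0 < u" "u \<le> 8*a^2"
    using y power_mono[OF ya, of 2] unfolding u_def by (simp_all add: add_pos_nonneg power_mult_distrib)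
  have qP: "0 < q^2*P" using D(5) a4 by linarith
  have P: "0 < P" using qP q by (simp add: zero_less_mult_iff)
  have X: "0 < q^2*u^2/P" using P q u by simp
  have u2: "u^2 \<le> (8*a^2)^2" using u by (intro power_mono) auto
  show ?thesis
  proof (cases "w^2 \<le> 1")
    case True
    have q2: "q \<le> 2" unfolding q_def using True by simp
    have "ln (q^2*u^2/P) \<le> q^2*u^2/P - 1"
      using X by (rule ln_le_minus_one)
    also have "\<dots> = q^2*(q^2*u^2 - P)/(q^2*P)"
      using P q by (simp add: field_simps)
    also have "\<dots> \<le> q^2*(28*a^2*w^2*q*u)/(4*a^2)^2"
      using D(2,3,5) q u a4 by (intro frac_le mult_left_mono mult_nonneg_nonneg) auto
    also have "\<dots> = (28*a^2*w^2)*((q^2*q)*u)/(4*a^2)^2"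
      by (simp add: algebra_simps)
    also have "\<dots> \<le> (28*a^2*w^2)*(8*(8*a^2))/(4*a^2)^2"
    proof -
      have "q^2*q \<le> 8" using power_mono[OF q2, of 3] q by (simp add: power2_eq_square power3_eq_cube)
      then have "(q^2*q)*u \<le> 8*(8*a^2)" using u q by (intro mult_mono) auto
      then show ?thesis by (intro divide_right_mono mult_left_mono) auto
    qed
    also have "\<dots> = 112 * w^2"
      using a by (simp add: field_simps power2_eq_square)
    finally show ?thesis unfolding D(1) .
  next
    case False
    have "q^2*u^2/P = q^2*(q^2*u^2)/(q^2*P)"
      using P q by (simp add: field_simps)
    also have "\<dots> \<le> q^2*(q^2*(8*a^2)^2)/(4*a^2)^2"
      using D(5) u2 a4 q by (intro frac_le mult_left_mono) auto
    also have "\<dots> = 4*q^4"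
      using a by (simp add: field_simps power2_eq_square power4_eq_xxxx)
    finally have "ln (q^2*u^2/P) \<le> ln (4*q^4)"
      using X by (rule ln_mono)
    also have "\<dots> = ln 4 + 4 * ln q"
      using q by (simp add: ln_mult ln_realpow)
    also have "\<dots> \<le> 3 + 4 * w^2"
      using ln_le_minus_one[of 4] ln_le_minus_one[of q] q unfolding q_def by simp
    also have "\<dots> \<le> 112 * w^2"
      using False by simp
    finally show ?thesis unfolding D(1) .
  qed
qed

lemma log_kernel_second_difference_le:
  fixes a y w :: real
  assumes y: "0 < y" and a: "0 < a"
  shows "log_kernel a y (w*y) + log_kernel a y (-(w*y)) - 2 * log_kernel a y 0
    \<le> 112 * w^2 * indicator {0<..2*a} y + 56 * a^2 * w^2 * (1 + w^2) * (indicator {2*a<..} y * (1/y^2))"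
  using log_kernel_second_difference_le_near[OF y a, of w]
    log_kernel_second_difference_le_far[OF y, of a w] y a
  by (cases "y \<le> 2*a") (auto simp: indicator_def)

section \<open>The integrand of \<open>u2\<close>\<close>

lemma abs_ln_le:
  fixes t v W :: real
  assumes t: "0 < t" and tv: "t \<le> v" and vW: "v \<le> W"
  shows "\<bar>ln v\<bar> \<le> ln (1 + 1/t) + ln (1 + W)"
proof (cases "1 \<le> v")
  case True
  then have "\<bar>ln v\<bar> \<le> ln (1 + W)"
    using vW by simp
  moreover have "0 \<le> ln (1 + 1/t)"
    using t by simp
  ultimately show ?thesis
    by linarith
next
  case False
  have v: "0 < v" using t tv by simp
  have "\<bar>ln v\<bar> = ln (1/v)" using False v by (simp add: ln_div)
  also have "\<dots> \<le> ln (1 + 1/t)"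
  proof (rule ln_mono)
    have "1/v \<le> 1/t" using t tv by (intro divide_left_mono) auto
    then show "1/v \<le> 1 + 1/t" by simp
  qed (use v in simp)
  moreover have "0 \<le> ln (1 + W)"
    using v vW by simp
  ultimately show ?thesis
    by linarith
qed

definition u2_kernel :: "(real \<Rightarrow> real) \<Rightarrow> real \<Rightarrow> real \<Rightarrow> real" where
  "u2_kernel f x y = ln ((y^2 + (f (x + y) - f x)^2) / (y^2 + (f (x + y) + f x)^2))"

lemma u2_eq_integral_u2_kernel: "u2 f x = 1/(4*pi) * integral\<^sup>L lborel (u2_kernel f x)"
  by (simp add: u2_def u2_kernel_def[abs_def])

lemma u2_kernel_eq_log_kernel:
  assumes "y \<noteq> 0"
  shows "u2_kernel f x y = log_kernel (f x) y (f (x + y) - f x)"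
proof -
  have "0 < y^2 + t^2" for t
    using assms by (simp add: add_pos_nonneg)
  then show ?thesis
    using assms unfolding u2_kernel_def log_kernel_def by (simp add: ln_div algebra_simps)
qed

lemma u2_eq_0:
  assumes "f x = 0"
  shows "u2 f x = 0"
proof -
  have "u2_kernel f x = (\<lambda>_. 0)"
    using assms by (simp add: u2_kernel_def fun_eq_iff)
  then show ?thesis
    by (simp add: u2_eq_integral_u2_kernel)
qed

lemma abs_u2_kernel_le:
  fixes f :: "real \<Rightarrow> real"
  assumes M: "\<And>z. \<bar>f z\<bar> \<le> M" and y: "y \<noteq> 0" and yY: "\<bar>y\<bar> \<le> Y"
  shows "\<bar>u2_kernel f x y\<bar> \<le> 2 * (ln (1 + 1/y^2) + ln (1 + (Y^2 + (2*M)^2)))"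
proof -
  define v1 where "v1 = y^2 + (f (x + y) - f x)^2"
  define v2 where "v2 = y^2 + (f (x + y) + f x)^2"
  have y2: "0 < y^2" using y by simp
  have "(f (x + y) - f x)^2 \<le> (2*M)^2" "(f (x + y) + f x)^2 \<le> (2*M)^2"
    unfolding abs_le_square_iff[symmetric] using M[of "x + y"] M[of x] by linarith+
  moreover have "y^2 \<le> Y^2" using yY by (simp add: abs_le_square_iff[symmetric])
  ultimately have v: "y^2 \<le> v1" "v1 \<le> Y^2 + (2*M)^2" "y^2 \<le> v2" "v2 \<le> Y^2 + (2*M)^2"
    unfolding v1_def v2_def by auto
  have "0 < v1" "0 < v2"
    using v y2 by linarith+
  then have "u2_kernel f x y = ln v1 - ln v2"
    unfolding u2_kernel_def v1_def[symmetric] v2_def[symmetric] by (simp add: ln_div)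
  then have "\<bar>u2_kernel f x y\<bar> \<le> \<bar>ln v1\<bar> + \<bar>ln v2\<bar>"
    by simp
  also have "\<dots> \<le> 2 * (ln (1 + 1/y^2) + ln (1 + (Y^2 + (2*M)^2)))"
    using abs_ln_le[OF y2 v(1,2)] abs_ln_le[OF y2 v(3,4)] by simp
  finally show ?thesis .
qed

lemma integrable_u2_kernel:
  fixes f :: "real \<Rightarrow> real"
  assumes fcont: "continuous_on UNIV f" and M: "\<And>z. \<bar>f z\<bar> \<le> M"
    and supp: "\<And>z. Y < \<bar>z - x\<bar> \<Longrightarrow> f z = 0"
  shows "integrable lborel (u2_kernel f x)"
proof -
  define W where "W = Y^2 + (2*M)^2"
  define G where "G = (\<lambda>y. 2 * ln (1 + 1/y^2) + 2 * ln (1 + W) * indicator {-Y..Y} y)"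
  have [measurable]: "f \<in> borel_measurable borel"
    by (rule borel_measurable_continuous_onI[OF fcont])
  have meas: "u2_kernel f x \<in> borel_measurable lborel"
    unfolding u2_kernel_def[abs_def] by measurable
  have "set_integrable lborel {0<..} (\<lambda>y::real. ln (1 + 1/y^2))"
    using set_integral_ln_one_plus_sq_div_sq(1)[of 1] by simp
  then have "integrable lborel (\<lambda>y::real. ln (1 + 1/y^2))"
    by (rule lborel_integral_even(1)[rotated 2]) auto
  moreover have "integrable lborel (indicator {-Y..Y} :: real \<Rightarrow> real)"
    by (rule integrable_real_indicator) (auto simp: emeasure_lborel_Icc_eq)
  ultimately have G: "integrable lborel G"
    unfolding G_def by (intro Bochner_Integration.integrable_add integrable_mult_right) auto
  have W: "0 \<le> W" unfolding W_def by simp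
  have "\<bar>u2_kernel f x y\<bar> \<le> G y" for y
  proof -
    have G0: "0 \<le> ln (1 + 1/y^2)" "0 \<le> 2 * ln (1 + W) * indicator {-Y..Y} y"
      using W by simp_all
    consider "y = 0" | "Y < \<bar>y\<bar>" | "y \<noteq> 0" "\<bar>y\<bar> \<le> Y" by linarith
    then show ?thesis
    proof cases
      case 1
      then show ?thesis unfolding u2_kernel_def G_def using G0 by simp
    next
      case 2
      then have "f (x + y) = 0" by (intro supp) simp
      then show ?thesis unfolding u2_kernel_def G_def using G0 W by simp
    next
      case 3
      then show ?thesis
        using abs_u2_kernel_le[OF M 3] unfolding G_def W_def by (simp add: abs_le_iff)
    qed
  qed
  then show ?thesis
    by (intro Bochner_Integration.integrable_bound[OF G meas])
       (auto intro!: AE_I2 order.trans[OF _ abs_ge_self])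
qed

text \<open>For \<open>y \<noteq> 0\<close> the correction term equals \<open>-2 log_kernel (f x) y 0\<close>.\<close>
definition u2_kernel_sym :: "(real \<Rightarrow> real) \<Rightarrow> real \<Rightarrow> real \<Rightarrow> real" where
  "u2_kernel_sym f x y = u2_kernel f x y + u2_kernel f x (-y) + 2 * ln (1 + (2 * f x)^2/y^2)"

lemma set_integral_u2_kernel_sym:
  fixes f :: "real \<Rightarrow> real"
  assumes int: "integrable lborel (u2_kernel f x)" and a: "0 < f x"
  shows "set_integrable lborel {0<..} (u2_kernel_sym f x)"
    and "(LBINT y:{0<..}. u2_kernel_sym f x y) = 4 * pi * (u2 f x + f x)"
proof -
  let ?I = "u2_kernel f x"
  let ?J = "\<lambda>y::real. ln (1 + (2 * f x)^2/y^2)"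
  have int_neg: "integrable lborel (\<lambda>y. ?I (-y))"
    using lborel_integrable_real_affine[OF int, of "-1" 0] by simp
  have integral_neg: "integral\<^sup>L lborel (\<lambda>y. ?I (-y)) = integral\<^sup>L lborel ?I"
    using lborel_integral_real_affine[of "-1" ?I 0] by simp
  have "0 < 2 * f x" using a by simp
  note I0 = set_integral_ln_one_plus_sq_div_sq[OF this]
  have int0: "integrable lborel ?J"
    by (rule lborel_integral_even(1)[OF _ _ I0(1)]) auto
  have integral0: "integral\<^sup>L lborel ?J = 4 * pi * f x"
    using lborel_integral_even(2)[OF _ _ I0(1)] I0(2) by simp
  have int_sym: "integrable lborel (u2_kernel_sym f x)"
    unfolding u2_kernel_sym_def[abs_def]
    by (intro Bochner_Integration.integrable_add integrable_mult_right int int_neg int0)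
  then show set_int: "set_integrable lborel {0<..} (u2_kernel_sym f x)"
    unfolding set_integrable_def by (intro integrable_mult_indicator) auto
  have "integral\<^sup>L lborel (u2_kernel_sym f x) = 2 * integral\<^sup>L lborel ?I + 2 * integral\<^sup>L lborel ?J"
    unfolding u2_kernel_sym_def[abs_def] using int int_neg int0 integral_neg by simp
  also have "\<dots> = 8 * pi * (u2 f x + f x)"
    unfolding u2_eq_integral_u2_kernel integral0 by (simp add: field_simps)
  finally show "(LBINT y:{0<..}. u2_kernel_sym f x y) = 4 * pi * (u2 f x + f x)"
    using lborel_integral_even(2)[OF borel_measurable_integrable[OF int_sym] _ set_int]
    by (simp add: u2_kernel_sym_def)
qed

lemma abs_u2_kernel_sym_le:
  fixes f f' :: "real \<Rightarrow> real"
  assumes fder: "\<And>z. (f has_real_derivative f' z) (at z)" and L: "\<And>z. \<bar>f' z\<bar> \<le> L"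
    and a: "0 \<le> f x" and y: "0 < y"
  shows "\<bar>u2_kernel_sym f x y\<bar> \<le> 8 * f x * (modulus_cont f' y / y)
    + (log_kernel (f x) y (f' x * y) + log_kernel (f x) y (-(f' x * y)) - 2 * log_kernel (f x) y 0)"
proof -
  let ?\<phi> = "log_kernel (f x) y"
  have lin: "\<bar>?\<phi> (f (x + z) - f x) - ?\<phi> (f' x * z)\<bar> \<le> 4 * f x * (modulus_cont f' y / y)"
    if "\<bar>z\<bar> = y" for z
  proof -
    have "\<bar>?\<phi> (f (x + z) - f x) - ?\<phi> (f' x * z)\<bar> \<le> 4 * f x / y^2 * \<bar>f (x + z) - f x - f' x * z\<bar>"
      using y a by (intro log_kernel_lipschitz) auto
    also have "\<dots> \<le> 4 * f x / y^2 * (y * modulus_cont f' y)"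
      using abs_taylor_remainder_le_modulus_cont[OF fder L, of x z] that a
      by (intro mult_left_mono) auto
    also have "\<dots> = 4 * f x * (modulus_cont f' y / y)"
      using y by (simp add: field_simps power2_eq_square)
    finally show ?thesis .
  qed
  have "0 < y^2 + 4 * (f x)^2"
    using y by (simp add: add_pos_nonneg)
  then have "?\<phi> 0 = - ln ((y^2 + (2 * f x)^2)/y^2)"
    using y by (simp add: log_kernel_def ln_div)
  also have "(y^2 + (2 * f x)^2)/y^2 = 1 + (2 * f x)^2/y^2"
    using y by (simp add: field_simps)
  finally have "?\<phi> 0 = - ln (1 + (2 * f x)^2/y^2)" .
  then have sym: "u2_kernel_sym f x y
      = (?\<phi> (f (x + y) - f x) - ?\<phi> (f' x * y)) + (?\<phi> (f (x - y) - f x) - ?\<phi> (-(f' x * y)))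
        + (?\<phi> (f' x * y) + ?\<phi> (-(f' x * y)) - 2 * ?\<phi> 0)"
    using y unfolding u2_kernel_sym_def by (simp add: u2_kernel_eq_log_kernel log_kernel_def)
  have "\<bar>?\<phi> (f (x - y) - f x) - ?\<phi> (-(f' x * y))\<bar> \<le> 4 * f x * (modulus_cont f' y / y)"
    using lin[of "-y"] y by simp
  moreover have "0 \<le> ?\<phi> (f' x * y) + ?\<phi> (-(f' x * y)) - 2 * ?\<phi> 0"
    by (rule log_kernel_second_difference_nonneg[OF y])
  ultimately show ?thesis
    unfolding sym using lin[of y] y by linarith
qed

definition dini_majorant ::
    "(real \<Rightarrow> real) \<Rightarrow> real \<Rightarrow> real \<Rightarrow> real \<Rightarrow> real \<Rightarrow> real \<Rightarrow> real" where
  "dini_majorant \<omega> a s L Y y =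
     8*a * (indicator {0<..1} y * (\<omega> y / y)) + 16*a*L * indicator {1<..Y} y
     + 112 * s^2 * indicator {0<..2*a} y + 56*a^2 * s^2 * (1 + s^2) * (indicator {2*a<..} y * (1/y^2))
     + 8*a^2 * (indicator {Y<..} y * (1/y^2))"

lemma abs_u2_kernel_sym_le_dini_majorant:
  fixes f f' :: "real \<Rightarrow> real"
  assumes fder: "\<And>z. (f has_real_derivative f' z) (at z)" and L: "\<And>z. \<bar>f' z\<bar> \<le> L"
    and a: "0 < f x" and supp: "\<And>z. Y < \<bar>z - x\<bar> \<Longrightarrow> f z = 0" and y: "0 < y"
  shows "\<bar>u2_kernel_sym f x y\<bar> \<le> dini_majorant (modulus_cont f') (f x) (f' x) L Y y"
proof -
  have L0: "0 \<le> L" using L[of 0] by simp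
  have \<omega>: "0 \<le> modulus_cont f' y" using modulus_cont_nonneg[OF L] y by simp
  have terms_nonneg: "0 \<le> 8 * f x * (indicator {0<..1} y * (modulus_cont f' y / y))"
    "0 \<le> 16 * f x * L * indicator {1<..Y} y" "0 \<le> 112 * (f' x)^2 * indicator {0<..2 * f x} y"
    "0 \<le> 56 * (f x)^2 * (f' x)^2 * (1 + (f' x)^2) * (indicator {2 * f x<..} y * (1/y^2))"
    "0 \<le> 8 * (f x)^2 * (indicator {Y<..} y * (1/y^2))"
    using a L0 \<omega> y by simp_all
  show ?thesis
  proof (cases "Y < y")
    case True
    then have "f (x + y) = 0" "f (x + - y) = 0" by (auto intro: supp)
    then have "\<bar>u2_kernel_sym f x y\<bar> = 2 * ln (1 + (2 * f x)^2/y^2)"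
      using a y by (simp add: u2_kernel_sym_def u2_kernel_def add_pos_nonneg)
    also have "\<dots> \<le> 8 * (f x)^2 * (indicator {Y<..} y * (1/y^2))"
      using ln_add_one_self_le_self[of "(2 * f x)^2/y^2"] True by (simp add: power_mult_distrib)
    finally show ?thesis
      unfolding dini_majorant_def using terms_nonneg by linarith
  next
    case False
    have "8 * f x * (modulus_cont f' y / y)
        \<le> 8 * f x * (indicator {0<..1} y * (modulus_cont f' y / y)) + 16 * f x * L * indicator {1<..Y} y"
    proof (cases "y \<le> 1")
      case False
      have "modulus_cont f' y / y \<le> modulus_cont f' y"
        using False \<omega> by (simp add: divide_le_eq mult_le_cancel_left1)
      also have "\<dots> \<le> 2 * L"
        using modulus_cont_le[OF L] y by simp
      finally have "8 * f x * (modulus_cont f' y / y) \<le> 8 * f x * (2 * L)"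
        using a by (intro mult_left_mono) auto
      then show ?thesis
        using False \<open>\<not> Y < y\<close> by (simp add: indicator_def)
    qed (use y terms_nonneg in \<open>simp add: indicator_def\<close>)
    moreover have "log_kernel (f x) y (f' x * y) + log_kernel (f x) y (-(f' x * y))
        - 2 * log_kernel (f x) y 0
        \<le> 112 * (f' x)^2 * indicator {0<..2 * f x} y
          + 56 * (f x)^2 * (f' x)^2 * (1 + (f' x)^2) * (indicator {2 * f x<..} y * (1/y^2))"
      by (rule log_kernel_second_difference_le[OF y a])
    ultimately show ?thesis
      using abs_u2_kernel_sym_le[OF fder L less_imp_le[OF a] y] terms_nonneg
      unfolding dini_majorant_def by linarith
  qed
qed

lemma has_bochner_integral_dini_majorant:
  fixes \<omega> :: "real \<Rightarrow> real"
  assumes dini: "set_integrable lborel {0<..1} (\<lambda>r. \<omega> r / r)" and a: "0 < a" and Y: "1 \<le> Y"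
  shows "has_bochner_integral lborel (dini_majorant \<omega> a s L Y)
    (8*a * (LBINT r:{0<..1}. \<omega> r / r) + 16*a*L * (Y - 1) + 224*a * s^2 + 28*a * s^2 * (1 + s^2)
      + 8*a^2 / Y)"
proof -
  have "0 < 2*a" "0 < Y" using a Y by simp_all
  note inv_sq = set_integral_inverse_square[OF this(1)] set_integral_inverse_square[OF this(2)]
  have "has_bochner_integral lborel (dini_majorant \<omega> a s L Y)
    (8*a * (LBINT r:{0<..1}. \<omega> r / r) + 16*a*L * (Y - 1) + 112 * s^2 * (2*a)
      + 56*a^2 * s^2 * (1 + s^2) * (1/(2*a)) + 8*a^2 * (1/Y))"
    unfolding dini_majorant_def[abs_def]
    by (intro has_bochner_integral_add has_bochner_integral_mult_right)
       (use dini inv_sq a Y in \<open>simp_all add: has_bochner_integral_iff set_integrable_def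
          set_lebesgue_integral_def\<close>)
  moreover have "112 * s^2 * (2*a) = 224*a * s^2"
    and "56*a^2 * s^2 * (1 + s^2) * (1/(2*a)) = 28*a * s^2 * (1 + s^2)"
    using a by (simp_all add: field_simps power2_eq_square)
  ultimately show ?thesis
    by simp
qed

lemma abs_u2_add_le:
  fixes f f' :: "real \<Rightarrow> real"
  assumes fcont: "continuous_on UNIV f" and fder: "\<And>z. (f has_real_derivative f' z) (at z)"
    and L: "\<And>z. \<bar>f' z\<bar> \<le> L" and M: "\<And>z. \<bar>f z\<bar> \<le> M" and a: "0 < f x" and Y: "1 \<le> Y"
    and supp: "\<And>z. Y < \<bar>z - x\<bar> \<Longrightarrow> f z = 0"
    and dini: "set_integrable lborel {0<..1} (\<lambda>r. modulus_cont f' r / r)"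
  shows "4 * pi * \<bar>u2 f x + f x\<bar> \<le> f x * (8 * dini_norm f' + 16 * L * Y + 224 * (f' x)^2
    + 28 * (f' x)^2 * (1 + (f' x)^2) + 8 * f x / Y)"
proof -
  let ?E = "dini_majorant (modulus_cont f') (f x) (f' x) L Y"
  have E: "has_bochner_integral lborel ?E (f x * (8 * dini_norm f' + 16 * L * (Y - 1)
      + 224 * (f' x)^2 + 28 * (f' x)^2 * (1 + (f' x)^2) + 8 * f x / Y))"
    using has_bochner_integral_dini_majorant[OF dini a Y, of "f' x" L]
    by (simp add: dini_norm_def algebra_simps power2_eq_square)
  have "indicator {0<..} y * ?E y = ?E y" for y
    using a Y by (cases "0 < y") (simp_all add: dini_majorant_def indicator_def)
  then have E_pos: "(\<lambda>y. indicator {0<..} y * ?E y) = ?E"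
    by (simp add: fun_eq_iff)
  note sym = set_integral_u2_kernel_sym[OF integrable_u2_kernel[OF fcont M supp] a]
  have "4 * pi * \<bar>u2 f x + f x\<bar> = \<bar>LBINT y:{0<..}. u2_kernel_sym f x y\<bar>"
    using sym(2) by (simp add: abs_mult)
  also have "\<dots> \<le> (LBINT y:{0<..}. \<bar>u2_kernel_sym f x y\<bar>)"
    using set_integral_norm_bound[OF sym(1)] by simp
  also have "\<dots> \<le> (LBINT y:{0<..}. ?E y)"
    using E abs_u2_kernel_sym_le_dini_majorant[where Y = Y, OF fder L a supp]
    by (intro set_integral_mono set_integrable_abs sym(1))
       (auto simp: set_integrable_def E_pos has_bochner_integral_iff)
  also have "\<dots> = f x * (8 * dini_norm f' + 16 * L * (Y - 1)
      + 224 * (f' x)^2 + 28 * (f' x)^2 * (1 + (f' x)^2) + 8 * f x / Y)"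
    using E by (simp add: set_lebesgue_integral_def E_pos has_bochner_integral_iff)
  also have "\<dots> \<le> f x * (8 * dini_norm f' + 16 * L * Y
      + 224 * (f' x)^2 + 28 * (f' x)^2 * (1 + (f' x)^2) + 8 * f x / Y)"
    using a L[of 0] by (intro mult_left_mono) (auto simp: algebra_simps)
  finally show ?thesis .
qed

section \<open>Bounds in terms of the Dini norm\<close>

lemma power_le_one_add_power:
  fixes x :: real
  assumes "0 \<le> x" and "m \<le> n"
  shows "x^m \<le> 1 + x^n"
proof (cases "x \<le> 1")
  case True
  then show ?thesis
    using assms by (simp add: power_le_one add_increasing2)
next
  case False
  then have "x^m \<le> x^n"
    by (intro power_increasing[OF assms(2)]) simp
  then show ?thesis
    by simp
qed

lemma relative_error_terms_le:
  fixes D L s a Y c :: real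
  assumes D: "0 \<le> D" and L: "0 \<le> L" and LD: "L \<le> c * D" and c: "0 \<le> c"
    and sL: "\<bar>s\<bar> \<le> L" and a: "0 \<le> a" and aL: "a \<le> L * Y" and Y: "0 < Y"
  shows "8*D + 16*L*Y + 224 * s^2 + 28 * s^2 * (1 + s^2) + 8*a/Y
    \<le> (8 + 16*Y*c + 288*c) * D * (1 + L^5)"
proof -
  have P: "1 \<le> 1 + L^5" using L by simp
  have cD: "0 \<le> c*D" using c D by simp
  have s2: "s^2 \<le> L^2" using sL by (simp add: abs_le_square_iff[symmetric] abs_of_nonneg L)
  have s4: "s^2 * s^2 \<le> L * L^3"
    using mult_mono[OF s2 s2] by (simp add: power2_eq_square power3_eq_cube)
  have "L * L^k \<le> c*D * (1 + L^5)" if "k \<le> 5" for k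
    using LD power_le_one_add_power[OF L that] cD L by (intro mult_mono) auto
  from this[of 1] this[of 3] have "L^2 \<le> c*D * (1 + L^5)" "L * L^3 \<le> c*D * (1 + L^5)"
    by (simp_all add: power2_eq_square)
  moreover have "D \<le> D * (1 + L^5)"
    using mult_left_mono[OF P D] by simp
  moreover have cDP: "L \<le> c*D * (1 + L^5)"
    using LD mult_left_mono[OF P cD] by simp
  then have "16*L*Y \<le> 16*Y * (c*D * (1 + L^5))"
    using mult_left_mono[OF cDP, of "16*Y"] Y by (simp add: algebra_simps)
  moreover have "a/Y \<le> L"
    using aL Y by (simp add: divide_le_eq mult.commute)
  then have "8*a/Y \<le> 8 * (c*D * (1 + L^5))"
    using cDP by simp
  ultimately have "8*D + 16*L*Y + 252 * L^2 + 28 * (L * L^3) + 8*a/Y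
      \<le> (8 + 16*Y*c + 288*c) * D * (1 + L^5)"
    by (simp add: algebra_simps)
  moreover have "224 * s^2 + 28 * s^2 * (1 + s^2) \<le> 252 * L^2 + 28 * (L * L^3)"
    using s2 s4 by (simp add: algebra_simps)
  ultimately show ?thesis
    by linarith
qed

lemma one_add_power5_bound_le:
  fixes D L c C0 :: real
  assumes D: "0 \<le> D" and L: "0 \<le> L" and LD: "L \<le> c * D" and c: "0 \<le> c" and C0: "0 \<le> C0"
  shows "1 + C0 * D * (1 + L^5) \<le> (1 + C0 * (1 + c^5)) * (1 + D^6)"
proof -
  have "D * L^5 \<le> D * (c*D)^5"
    using LD L D by (intro mult_left_mono power_mono) auto
  also have "\<dots> = c^5 * D^6"
    by (simp add: power_mult_distrib eval_nat_numeral)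
  also have "\<dots> \<le> c^5 * (1 + D^6)"
    using c by (intro mult_left_mono) auto
  finally have "C0 * (D * L^5) \<le> C0 * (c^5 * (1 + D^6))"
    using C0 by (rule mult_left_mono)
  moreover have "C0 * D \<le> C0 * (1 + D^6)"
    using power_le_one_add_power[OF D, of 1 6] C0 by (intro mult_left_mono) auto
  ultimately have "1 + C0 * D * (1 + L^5) \<le> 1 + C0 * (1 + D^6) + C0 * (c^5 * (1 + D^6))"
    by (simp add: algebra_simps)
  also have "\<dots> \<le> (1 + C0 * (1 + c^5)) * (1 + D^6)"
    by (simp add: algebra_simps)
  finally show ?thesis .
qed

lemma exists_outside_within:
  fixes K :: "real set"
  assumes K: "\<forall>z\<in>K. \<bar>z\<bar> \<le> k" and k: "0 \<le> k"
  shows "\<exists>z'. z' \<notin> K \<and> \<bar>z - z'\<bar> \<le> 2*k + 1"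
proof (cases "z \<in> K")
  case True
  then show ?thesis
    using K k by (intro exI[of _ "k + 1"]) force
qed (use k in auto)

lemma sup_norm_le_dini_norm:
  fixes h :: "real \<Rightarrow> real"
  assumes K: "\<forall>z\<in>K. \<bar>z\<bar> \<le> k" and k: "0 \<le> k" and h: "h \<in> Cstar K"
  shows "sup_norm h \<le> (2*k + 2) * dini_norm h"
proof (rule sup_norm_le)
  fix z
  obtain z' where z': "z' \<notin> K" "\<bar>z - z'\<bar> \<le> 2*k + 1"
    using exists_outside_within[OF K k] by blast
  have "bounded (range h)" and "h z' = 0"
    and dini: "set_integrable lborel {0<..1} (\<lambda>r. modulus_cont h r / r)"
    using h z' unfolding Cstar_def by auto
  then show "\<bar>h z\<bar> \<le> (2*k + 2) * dini_norm h"
    using abs_le_dini_norm[of h "sup_norm h" "2*k + 1" z z'] abs_le_sup_norm z' k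
    by (simp add: algebra_simps)
qed

lemma abs_le_of_vanishing_outside:
  fixes f f' :: "real \<Rightarrow> real" and K :: "real set"
  assumes K: "\<forall>z\<in>K. \<bar>z\<bar> \<le> k" and k: "0 \<le> k" and fK: "\<forall>x. x \<notin> K \<longrightarrow> f x = 0"
    and fder: "\<forall>x. (f has_real_derivative f' x) (at x)" and L: "\<And>z. \<bar>f' z\<bar> \<le> L"
  shows "\<bar>f z\<bar> \<le> L * (2*k + 1)"
proof -
  obtain z' where z': "z' \<notin> K" "\<bar>z - z'\<bar> \<le> 2*k + 1"
    using exists_outside_within[OF K k] by blast
  have "\<bar>f z - f z'\<bar> \<le> L * \<bar>z - z'\<bar>"
    using fder L by (intro real_lipschitz_from_deriv_bound[OF convex_UNIV]) auto
  moreover have "0 \<le> L"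
    using L[of 0] by simp
  ultimately show ?thesis
    using z' fK by (metis diff_zero mult_left_mono order.trans)
qed

definition relative_error_constant :: "real \<Rightarrow> real" where
  "relative_error_constant k = 8 + 16*(2*k + 1)*(2*k + 2) + 288*(2*k + 2)"

lemma u2_relative_error_le:
  fixes f f' :: "real \<Rightarrow> real" and K :: "real set"
  assumes K: "\<forall>z\<in>K. \<bar>z\<bar> \<le> k" and k: "0 \<le> k"
    and fcont: "continuous_on UNIV f" and fpos: "\<forall>x. 0 \<le> f x" and fK: "\<forall>x. x \<notin> K \<longrightarrow> f x = 0"
    and fder: "\<forall>x. (f has_real_derivative f' x) (at x)" and f': "f' \<in> Cstar K"
  shows "\<bar>u2 f x + f x\<bar> \<le> f x * (relative_error_constant k * dini_norm f' * (1 + sup_norm f' ^ 5))"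
proof (cases "f x = 0")
  case True
  then show ?thesis by (simp add: u2_eq_0)
next
  case False
  then have a: "0 < f x" using fpos by (simp add: order.not_eq_order_implies_strict)
  define L where "L = sup_norm f'"
  have dini: "set_integrable lborel {0<..1} (\<lambda>r. modulus_cont f' r / r)"
    using f' unfolding Cstar_def by auto
  have L': "\<bar>f' z\<bar> \<le> L" for z
    using f' abs_le_sup_norm unfolding Cstar_def L_def by auto
  have LD: "L \<le> (2*k + 2) * dini_norm f'"
    unfolding L_def by (rule sup_norm_le_dini_norm[OF K k f'])
  have L0: "0 \<le> L" and D0: "0 \<le> dini_norm f'"
    using L'[of 0] dini_norm_nonneg[OF L'] by simp_all
  have M: "\<bar>f z\<bar> \<le> L * (2*k + 1)" for z
    using abs_le_of_vanishing_outside[OF K k fK fder L'] .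
  have x: "\<bar>x\<bar> \<le> k"
    using K fK False by blast
  have supp: "f z = 0" if "2*k + 1 < \<bar>z - x\<bar>" for z
  proof -
    have "\<not> \<bar>z\<bar> \<le> k" using that x by linarith
    then show ?thesis using K fK by blast
  qed
  have "1 * \<bar>u2 f x + f x\<bar> \<le> 4 * pi * \<bar>u2 f x + f x\<bar>"
    using pi_gt3 by (intro mult_right_mono) auto
  also have "\<dots> \<le> f x * (8 * dini_norm f' + 16 * L * (2*k + 1) + 224 * (f' x)^2
      + 28 * (f' x)^2 * (1 + (f' x)^2) + 8 * f x / (2*k + 1))"
    using fder by (intro abs_u2_add_le[OF fcont _ L' M a _ supp dini]) (use k in auto)
  also have "\<dots> \<le> f x * (relative_error_constant k * dini_norm f' * (1 + L^5))"
    unfolding relative_error_constant_def using a M[of x] k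
    by (intro mult_left_mono relative_error_terms_le[OF D0 L0 LD _ L']) auto
  finally show ?thesis
    unfolding L_def by simp
qed

lemma exists_factors_of_relative_bound:
  fixes f g :: "real \<Rightarrow> real"
  assumes fpos: "\<And>x. 0 \<le> f x" and zero: "\<And>x. f x = 0 \<Longrightarrow> g x = 0"
    and bound: "\<And>x. \<bar>g x + f x\<bar> \<le> f x * B" and B: "0 \<le> B"
  shows "\<exists>U R. bounded (range U) \<and> bounded (range R)
    \<and> (\<forall>x. g x = f x * U x \<and> g x = - f x * (1 + R x))
    \<and> sup_norm U \<le> 1 + B \<and> sup_norm R \<le> B"
proof -
  define R where "R x = (if f x = 0 then 0 else - (g x + f x) / f x)" for x
  define U where "U x = - 1 - R x" for x
  have R: "\<bar>R x\<bar> \<le> B" for x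
    using bound[of x] fpos[of x] B by (auto simp: R_def abs_divide divide_le_eq mult.commute)
  have U: "\<bar>U x\<bar> \<le> 1 + B" for x
    using R[of x] by (simp add: U_def)
  have "g x = - f x * (1 + R x)" for x
    using zero[of x] by (auto simp: R_def field_simps)
  then have "bounded (range U) \<and> bounded (range R)
    \<and> (\<forall>x. g x = f x * U x \<and> g x = - f x * (1 + R x))
    \<and> sup_norm U \<le> 1 + B \<and> sup_norm R \<le> B"
    using R U by (auto simp: bounded_iff U_def algebra_simps intro!: sup_norm_le)
  then show ?thesis
    by blast
qed

lemma u2_factorisation:
  fixes f f' :: "real \<Rightarrow> real" and K :: "real set"
  assumes K: "\<forall>z\<in>K. \<bar>z\<bar> \<le> k" and k: "0 \<le> k"
    and fcont: "continuous_on UNIV f" and fpos: "\<forall>x. 0 \<le> f x" and fK: "\<forall>x. x \<notin> K \<longrightarrow> f x = 0"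
    and fder: "\<forall>x. (f has_real_derivative f' x) (at x)" and f': "f' \<in> Cstar K"
  defines "C \<equiv> 1 + relative_error_constant k * (1 + (2*k + 2)^5)"
  shows "\<exists>U R. bounded (range U) \<and> bounded (range R)
    \<and> (\<forall>x. u2 f x = f x * U x \<and> u2 f x = - f x * (1 + R x))
    \<and> sup_norm U \<le> C * (1 + dini_norm f' ^ 6)
    \<and> sup_norm R \<le> C * dini_norm f' * (1 + sup_norm f' ^ 5)"
proof -
  define C0 D L where "C0 = relative_error_constant k" and "D = dini_norm f'" and "L = sup_norm f'"
  have C0: "0 \<le> C0" and c: "0 \<le> 2*k + 2"
    using k by (simp_all add: C0_def relative_error_constant_def)
  have LD: "L \<le> (2*k + 2) * D"
    unfolding L_def D_def by (rule sup_norm_le_dini_norm[OF K k f'])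
  have f'L: "\<bar>f' z\<bar> \<le> L" for z
    using f' abs_le_sup_norm unfolding L_def Cstar_def by blast
  have L: "0 \<le> L" and D: "0 \<le> D"
    using f'L[of 0] dini_norm_nonneg[OF f'L] by (simp_all add: D_def)
  obtain U R where UR: "bounded (range U) \<and> bounded (range R)
      \<and> (\<forall>x. u2 f x = f x * U x \<and> u2 f x = - f x * (1 + R x))"
    and U: "sup_norm U \<le> 1 + C0 * D * (1 + L^5)" and R: "sup_norm R \<le> C0 * D * (1 + L^5)"
    using exists_factors_of_relative_bound[of f "u2 f" "C0 * D * (1 + L^5)"]
      u2_relative_error_le[OF assms(1-7)] fpos C0 D L
    unfolding C0_def D_def L_def by (auto simp: u2_eq_0)
  have "C0 \<le> C"
    unfolding C_def C0_def[symmetric]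
    using mult_nonneg_nonneg[OF C0 zero_le_power[OF c, of 5]] by (simp add: algebra_simps)
  then have "C0 * D * (1 + L^5) \<le> C * D * (1 + L^5)"
    using D L by (intro mult_right_mono) auto
  then have "sup_norm U \<le> C * (1 + D^6)" and "sup_norm R \<le> C * D * (1 + L^5)"
    using U R one_add_power5_bound_le[OF D L LD c C0] unfolding C_def C0_def by linarith+
  with UR show ?thesis
    unfolding D_def L_def by blast
qed

theorem mainTheorem7:
  fixes K :: "real set"
  assumes "compact K"
  shows "\<exists>C::real. \<forall>f f' :: real \<Rightarrow> real.
           continuous_on UNIV f \<and> (\<forall>x. f x \<ge> 0) \<and> (\<forall>x. x \<notin> K \<longrightarrow> f x = 0)
           \<and> (\<forall>x. (f has_real_derivative f' x) (at x)) \<and> f' \<in> Cstar K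
           \<longrightarrow> (\<exists>U R :: real \<Rightarrow> real.
                 bounded (range U) \<and> bounded (range R)
                 \<and> (\<forall>x. u2 f x = f x * U x \<and> u2 f x = - f x * (1 + R x))
                 \<and> sup_norm U \<le> C * (1 + dini_norm f' ^ 6)
                 \<and> sup_norm R \<le> C * dini_norm f' * (1 + sup_norm f' ^ 5))"
proof -
  obtain k where K: "\<forall>z\<in>K. \<bar>z\<bar> \<le> k" and k: "0 \<le> k"
    using compact_imp_bounded[OF assms] unfolding bounded_iff
    by (metis abs_ge_zero order.trans real_norm_def)
  show ?thesis
    by (rule exI, intro allI impI, elim conjE) (rule u2_factorisation[OF K k]; assumption)
qed

end
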